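(* Let $\mathfrak{h}_3$ be the (real, 3-dimensional) Heisenberg Lie algebra and $\mathrm{ad}^*$ its coadjoint representation on the dual space $\mathfrak{h}_3^*$. Up to isometric Lie algebra isomorphism, every butterfly algebra is $\mathfrak{b}_6=\mathfrak{h}_3\oplus_{\mathrm{ad}^*}\mathfrak{h}_3^*$ with the bilinear form $$(X+X^*,\,Y+Y^* )=X^*(Y)+Y^*(X)$$ for $X,Y\in\mathfrak{h}_3$ and $X^*,Y^*\in\mathfrak{h}_3^*$.
   Context: A butterfly algebra is a real 2-step nilpotent Lie algebra of dimension $6$ endowed with a symmetric bilinear form $(\cdot,\cdot)$ that is invariant, i.e. $([X,Y],Z)=-(Y,[X,Z])$, such that some element of its commutator subalgebra is not in the radical $\{X\mid (X,\cdot)=0\}$ of the form. The semidirect sum $\mathfrak{h}_3\oplus_{\mathrm{ad}^*}\mathfrak{h}_3^*$ is the vector space $\mathfrak{h}_3\oplus\mathfrak{h}_3^*$ with bracket $[X+\xi,Y+\eta]=[X,Y]+\mathrm{ad}^*(X)\eta-\mathrm{ad}^*(Y)\xi$, where $\mathrm{ad}^*(X)\eta=-\eta\circ\mathrm{ad}(X)$, and $\mathfrak{h}_3^*$ is an abelian ideal. *)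

theory Defs
  imports "HOL-Analysis.Analysis"
begin

definition lie_algebra :: "('a::real_vector \<Rightarrow> 'a \<Rightarrow> 'a) \<Rightarrow> bool" where
  "lie_algebra br \<longleftrightarrow> bilinear br \<and> (\<forall>x. br x x = 0) \<and>
     (\<forall>x y z. br x (br y z) + br y (br z x) + br z (br x y) = 0)"

definition commutator_subalgebra :: "('a::real_vector \<Rightarrow> 'a \<Rightarrow> 'a) \<Rightarrow> 'a set" where
  "commutator_subalgebra br = span {br x y | x y. True}"

definition two_step_nilpotent :: "('a::real_vector \<Rightarrow> 'a \<Rightarrow> 'a) \<Rightarrow> bool" where
  "two_step_nilpotent br \<longleftrightarrow> (\<forall>x y z. br x (br y z) = 0) \<and> (\<exists>x y. br x y \<noteq> 0)"

definition invariant_symmetric_form ::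
  "('a::real_vector \<Rightarrow> 'a \<Rightarrow> 'a) \<Rightarrow> ('a \<Rightarrow> 'a \<Rightarrow> real) \<Rightarrow> bool" where
  "invariant_symmetric_form br B \<longleftrightarrow> bilinear B \<and> (\<forall>x y. B x y = B y x) \<and>
     (\<forall>x y z. B (br x y) z = - B y (br x z))"

definition form_radical :: "('a \<Rightarrow> 'a \<Rightarrow> real) \<Rightarrow> 'a set" where
  "form_radical B = {x. \<forall>y. B x y = 0}"

text \<open>Butterfly algebra (dimension 6 is imposed separately via DIM).\<close>
definition butterfly_algebra ::
  "('a::real_vector \<Rightarrow> 'a \<Rightarrow> 'a) \<Rightarrow> ('a \<Rightarrow> 'a \<Rightarrow> real) \<Rightarrow> bool" where
  "butterfly_algebra br B \<longleftrightarrow> lie_algebra br \<and> two_step_nilpotent br \<and>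
     invariant_symmetric_form br B \<and>
     (\<exists>z\<in>commutator_subalgebra br. z \<notin> form_radical B)"

text \<open>Heisenberg algebra h3 = R^3 with basis e1,e2,e3 and [e1,e2] = e3.\<close>
definition h3_bracket :: "real^3 \<Rightarrow> real^3 \<Rightarrow> real^3" where
  "h3_bracket x y = (\<chi> i. if i = 3 then x$1 * y$2 - x$2 * y$1 else 0)"

text \<open>The dual h3* is identified with R^3 via the standard pairing:
  a vector xi represents the functional Y \<mapsto> xi \<bullet> Y.\<close>
definition h3_pair :: "real^3 \<Rightarrow> real^3 \<Rightarrow> real" where
  "h3_pair xi Y = xi \<bullet> Y"

text \<open>Coadjoint action: (ad*(X) eta)(Y) = - eta([X,Y]); the coordinates of this
  functional are its values on the standard basis.\<close>
definition coad :: "real^3 \<Rightarrow> real^3 \<Rightarrow> real^3" where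
  "coad X eta = (\<chi> i. - h3_pair eta (h3_bracket X (axis i 1)))"

definition b6_bracket :: "((real^3) \<times> (real^3)) \<Rightarrow> ((real^3) \<times> (real^3)) \<Rightarrow> ((real^3) \<times> (real^3))" where
  "b6_bracket u v = (h3_bracket (fst u) (fst v), coad (fst u) (snd v) - coad (fst v) (snd u))"

definition b6_form :: "((real^3) \<times> (real^3)) \<Rightarrow> ((real^3) \<times> (real^3)) \<Rightarrow> real" where
  "b6_form u v = h3_pair (snd u) (fst v) + h3_pair (snd v) (fst u)"

definition isometric_lie_iso ::
  "('a::real_vector \<Rightarrow> 'a \<Rightarrow> 'a) \<Rightarrow> ('a \<Rightarrow> 'a \<Rightarrow> real) \<Rightarrow>
   ('b::real_vector \<Rightarrow> 'b \<Rightarrow> 'b) \<Rightarrow> ('b \<Rightarrow> 'b \<Rightarrow> real) \<Rightarrow> ('a \<Rightarrow> 'b) \<Rightarrow> bool" where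
  "isometric_lie_iso br B br' B' f \<longleftrightarrow> linear f \<and> bij f \<and>
     (\<forall>x y. f (br x y) = br' (f x) (f y)) \<and> (\<forall>x y. B' (f x) (f y) = B x y)"

end

theory Submission
  imports Defs
begin

text \<open>In a butterfly algebra some \<open>B([a,b],c)\<close> is nonzero, since otherwise the derived algebra
  would lie in the radical. Normalising it to \<open>1\<close> and correcting \<open>a, b, c\<close> by central
  elements, one gets an isotropic triple \<open>e\<^sub>1, e\<^sub>2, e\<^sub>3\<close> with \<open>B([e\<^sub>1,e\<^sub>2],e\<^sub>3) = 1\<close>.
  Invariance and two-step nilpotency then make \<open>e\<^sub>1, e\<^sub>2, [e\<^sub>1,e\<^sub>2]\<close> and
  \<open>[e\<^sub>2,e\<^sub>3], [e\<^sub>3,e\<^sub>1], e\<^sub>3\<close> a copy of the standard basis of \<open>h\<^sub>3\<close> and its dual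
  basis, with exactly the brackets and pairings of \<open>b\<^sub>6\<close>. The resulting isometric
  homomorphism from \<open>b\<^sub>6\<close> is injective because the form on \<open>b\<^sub>6\<close> is nondegenerate,
  hence bijective by counting dimensions; its inverse is the required isomorphism.\<close>

lemma lie_algebra_anticommute:
  assumes "lie_algebra br"
  shows "br x y = - br y x"
proof -
  have br: "bilinear br" and alt: "\<And>x. br x x = 0"
    using assms unfolding lie_algebra_def by auto
  have "br (x + y) (x + y) = br x x + br y x + (br x y + br y y)"
    by (simp only: bilinear_ladd[OF br] bilinear_radd[OF br])
  then have "br x y + br y x = 0" by (simp add: alt add.commute)
  then show ?thesis by (simp add: eq_neg_iff_add_eq_0)
qed

lemma invariant_form_bracket_cyclic:
  assumes "lie_algebra br" "invariant_symmetric_form br B"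
  shows "B (br x y) z = B (br y z) x"
proof -
  have bB: "bilinear B" and sym: "\<And>x y. B x y = B y x"
    and inv: "\<And>x y z. B (br x y) z = - B y (br x z)"
    using assms(2) unfolding invariant_symmetric_form_def by blast+
  have "B (br y z) x = - B z (br y x)" by (rule inv)
  also have "\<dots> = B z (br x y)"
    by (simp add: lie_algebra_anticommute[OF assms(1), of y x] bilinear_rneg[OF bB])
  finally show ?thesis by (simp add: sym)
qed

lemma invariant_form_bracket_self_left:
  assumes "lie_algebra br" "invariant_symmetric_form br B"
  shows "B (br x y) x = 0"
proof -
  have bB: "bilinear B" and inv: "B (br x y) x = - B y (br x x)" and alt: "br x x = 0"
    using assms unfolding lie_algebra_def invariant_symmetric_form_def by blast+
  then show ?thesis by (simp add: bilinear_rzero[OF bB])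
qed

lemma invariant_form_bracket_self_right:
  assumes "invariant_symmetric_form br B"
  shows "B (br x y) y = 0"
proof -
  have "B (br x y) y = - B y (br x y)" and "B y (br x y) = B (br x y) y"
    using assms unfolding invariant_symmetric_form_def by blast+
  then show ?thesis by simp
qed

lemma invariant_form_bracket_bracket:
  assumes "two_step_nilpotent br" "invariant_symmetric_form br B"
  shows "B (br x y) (br z w) = 0"
proof -
  have bB: "bilinear B" and inv: "B (br x y) (br z w) = - B y (br x (br z w))"
    and nil: "br x (br z w) = 0"
    using assms unfolding two_step_nilpotent_def invariant_symmetric_form_def by blast+
  then show ?thesis by (simp add: bilinear_rzero[OF bB])
qed

lemma subspace_form_radical:
  assumes "bilinear B"
  shows "subspace (form_radical B)"
  unfolding subspace_def form_radical_def
  by (simp add: bilinear_ladd[OF assms] bilinear_lmul[OF assms] bilinear_lzero[OF assms])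

lemma butterfly_bracket_pairing_nonzero:
  assumes "butterfly_algebra br B"
  shows "\<exists>x y z. B (br x y) z \<noteq> 0"
proof (rule ccontr)
  assume "\<not> ?thesis"
  then have "{br x y | x y. True} \<subseteq> form_radical B"
    unfolding form_radical_def by blast
  moreover have "subspace (form_radical B)"
    using assms subspace_form_radical
    unfolding butterfly_algebra_def invariant_symmetric_form_def by blast
  ultimately have "commutator_subalgebra br \<subseteq> form_radical B"
    unfolding commutator_subalgebra_def by (rule span_minimal)
  moreover obtain z where "z \<in> commutator_subalgebra br" "z \<notin> form_radical B"
    using assms unfolding butterfly_algebra_def by blast
  ultimately show False by blast
qed

text \<open>The elements \<open>[b,c], [c,a], [a,b]\<close> are central, isotropic and dual to \<open>a, b, c\<close>;
  subtracting half of the Gram matrix of \<open>a, b, c\<close> in this dual basis makes the triple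
  isotropic without changing its brackets.\<close>
lemma isotropic_triple_of_bracket_pairing:
  assumes lie: "lie_algebra br" and nil: "two_step_nilpotent br"
    and inv: "invariant_symmetric_form br B" and abc: "B (br a b) c = 1"
  obtains e1 e2 e3 where "B (br e1 e2) e3 = 1"
    and "\<And>u v. u \<in> {e1, e2, e3} \<Longrightarrow> v \<in> {e1, e2, e3} \<Longrightarrow> B u v = 0"
proof -
  have br: "bilinear br" and bB: "bilinear B" and sym: "\<And>x y. B x y = B y x"
    and central_left: "\<And>x y z. br x (br y z) = 0"
    using lie nil inv
    unfolding lie_algebra_def two_step_nilpotent_def invariant_symmetric_form_def by blast+
  have central_right: "br (br y z) x = 0" for x y z
    using lie_algebra_anticommute[OF lie, of "br y z" x] central_left by simp
  define f1 where "f1 = br b c"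
  define f2 where "f2 = br c a"
  define f3 where "f3 = br a b"
  define corr where
    "corr u = u - (B u a / 2) *\<^sub>R f1 - (B u b / 2) *\<^sub>R f2 - (B u c / 2) *\<^sub>R f3" for u
  have dual: "B f1 a = 1" "B f2 b = 1" "B f3 c = 1" "B a f1 = 1" "B b f2 = 1" "B c f3 = 1"
    using abc invariant_form_bracket_cyclic[OF lie inv, of a b c]
      invariant_form_bracket_cyclic[OF lie inv, of c a b] sym[of a f1] sym[of b f2] sym[of c f3]
    by (simp_all add: f1_def f2_def f3_def)
  have dual0: "B f1 b = 0" "B f1 c = 0" "B f2 c = 0" "B f2 a = 0" "B f3 a = 0" "B f3 b = 0"
    "B b f1 = 0" "B c f1 = 0" "B c f2 = 0" "B a f2 = 0" "B a f3 = 0" "B b f3 = 0"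
    using invariant_form_bracket_self_left[OF lie inv] invariant_form_bracket_self_right[OF inv]
      sym[of _ f1] sym[of _ f2] sym[of _ f3]
    by (simp_all add: f1_def f2_def f3_def)
  have isotropic: "B f g = 0" if "f \<in> {f1, f2, f3}" "g \<in> {f1, f2, f3}" for f g
    using that invariant_form_bracket_bracket[OF nil inv] by (auto simp: f1_def f2_def f3_def)
  have gram_sym: "B b a = B a b" "B c a = B a c" "B c b = B b c"
    by (simp_all add: sym)
  have corr_bracket: "br (corr u) (corr v) = br u v" for u v
    by (simp add: corr_def f1_def f2_def f3_def central_left central_right
        bilinear_lsub[OF br] bilinear_rsub[OF br] bilinear_lmul[OF br] bilinear_rmul[OF br])
  have corr_isotropic: "B (corr u) (corr v) = 0" if "u \<in> {a, b, c}" "v \<in> {a, b, c}" for u v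
    using that
    by (auto simp: corr_def bilinear_lsub[OF bB] bilinear_rsub[OF bB] bilinear_ladd[OF bB]
        bilinear_radd[OF bB] bilinear_lmul[OF bB] bilinear_rmul[OF bB] dual dual0 isotropic
        gram_sym algebra_simps)
  have "B (br (corr a) (corr b)) (corr c) = B f3 (corr c)"
    by (simp add: corr_bracket f3_def)
  also have "\<dots> = 1"
    using dual dual0 isotropic[of f3]
    by (simp add: corr_def bilinear_rsub[OF bB] bilinear_rmul[OF bB])
  finally show thesis
    using that[of "corr a" "corr b" "corr c"] corr_isotropic by blast
qed

lemma butterfly_isotropic_triple:
  assumes "butterfly_algebra br B"
  obtains e1 e2 e3 where "B (br e1 e2) e3 = 1"
    and "\<And>u v. u \<in> {e1, e2, e3} \<Longrightarrow> v \<in> {e1, e2, e3} \<Longrightarrow> B u v = 0"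
proof -
  have lie: "lie_algebra br" and nil: "two_step_nilpotent br"
    and inv: "invariant_symmetric_form br B"
    using assms unfolding butterfly_algebra_def by auto
  obtain a b w where w: "B (br a b) w \<noteq> 0"
    using butterfly_bracket_pairing_nonzero[OF assms] by blast
  have "bilinear B"
    using inv unfolding invariant_symmetric_form_def by blast
  then have "B (br a b) ((1 / B (br a b) w) *\<^sub>R w) = 1"
    using w by (simp add: bilinear_rmul)
  with lie nil inv show thesis
    using that by (rule isotropic_triple_of_bracket_pairing)
qed

definition b6_frame :: "('a::real_vector \<Rightarrow> 'a \<Rightarrow> 'a) \<Rightarrow> 'a \<Rightarrow> 'a \<Rightarrow> 'a \<Rightarrow> (real^3) \<times> (real^3) \<Rightarrow> 'a"
  where "b6_frame br e1 e2 e3 u =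
    (fst u $ 1) *\<^sub>R e1 + (fst u $ 2) *\<^sub>R e2 + (fst u $ 3) *\<^sub>R br e1 e2
    + (snd u $ 1) *\<^sub>R br e2 e3 + (snd u $ 2) *\<^sub>R br e3 e1 + (snd u $ 3) *\<^sub>R e3"

lemma b6_bracket_components:
  "fst (b6_bracket u v) $ 1 = 0" "fst (b6_bracket u v) $ 2 = 0"
  "fst (b6_bracket u v) $ 3 = fst u $ 1 * fst v $ 2 - fst u $ 2 * fst v $ 1"
  "snd (b6_bracket u v) $ 1 = snd v $ 3 * fst u $ 2 - snd u $ 3 * fst v $ 2"
  "snd (b6_bracket u v) $ 2 = snd u $ 3 * fst v $ 1 - snd v $ 3 * fst u $ 1"
  "snd (b6_bracket u v) $ 3 = 0"
  by (simp_all add: b6_bracket_def h3_bracket_def coad_def h3_pair_def inner_vec_def sum_3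
      axis_def algebra_simps)

lemma b6_form_components:
  "b6_form u v = (\<Sum>i\<in>UNIV. snd u $ i * fst v $ i + snd v $ i * fst u $ i)"
  by (simp add: b6_form_def h3_pair_def inner_vec_def sum.distrib)

lemma form_radical_b6_form: "form_radical b6_form = {0}"
proof -
  have "u = 0" if u: "\<And>v. b6_form u v = 0" for u
  proof -
    have "fst u $ i = 0" "snd u $ i = 0" for i
      using u[of "(0, axis i 1)"] u[of "(axis i 1, 0)"]
      by (simp_all add: b6_form_def h3_pair_def inner_axis inner_axis')
    then show "u = 0" by (simp add: prod_eq_iff vec_eq_iff)
  qed
  then show ?thesis by (auto simp: form_radical_def b6_form_def h3_pair_def)
qed

lemma linear_b6_frame: "linear (b6_frame br e1 e2 e3)"
  by (rule linearI) (simp_all add: b6_frame_def algebra_simps)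

lemma b6_frame_bracket:
  assumes "lie_algebra br" "two_step_nilpotent br"
  shows "br (b6_frame br e1 e2 e3 u) (b6_frame br e1 e2 e3 v)
    = b6_frame br e1 e2 e3 (b6_bracket u v)"
proof -
  have br: "bilinear br" and alt: "\<And>x. br x x = 0" and central: "\<And>x y z. br x (br y z) = 0"
    using assms unfolding lie_algebra_def two_step_nilpotent_def by auto
  have anti: "br x y = - br y x" for x y by (rule lie_algebra_anticommute[OF assms(1)])
  define f1 f2 f3 where "f1 = br e2 e3" and "f2 = br e3 e1" and "f3 = br e1 e2"
  have table: "br e1 e2 = f3" "br e2 e3 = f1" "br e3 e1 = f2"
    "br e2 e1 = - f3" "br e3 e2 = - f1" "br e1 e3 = - f2"
    using anti[of e2 e1] anti[of e3 e2] anti[of e1 e3] by (simp_all add: f1_def f2_def f3_def)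
  have f_central: "br x f = 0" "br f x = 0" if "f \<in> {f1, f2, f3}" for x f
    using that central anti[of f x] by (auto simp: f1_def f2_def f3_def)
  show ?thesis
    unfolding b6_frame_def table(1-3)
    by (simp add: b6_bracket_components bilinear_ladd[OF br] bilinear_radd[OF br]
        bilinear_lmul[OF br] bilinear_rmul[OF br] alt table f_central algebra_simps)
qed

lemma b6_frame_form:
  assumes "lie_algebra br" "two_step_nilpotent br" "invariant_symmetric_form br B"
    and norm: "B (br e1 e2) e3 = 1"
    and isotropic: "\<And>u v. u \<in> {e1, e2, e3} \<Longrightarrow> v \<in> {e1, e2, e3} \<Longrightarrow> B u v = 0"
  shows "B (b6_frame br e1 e2 e3 u) (b6_frame br e1 e2 e3 v) = b6_form u v"
proof -
  have bB: "bilinear B" and sym: "\<And>x y. B x y = B y x"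
    using assms(3) unfolding invariant_symmetric_form_def by blast+
  have dual: "B (br e1 e2) e3 = 1" "B (br e2 e3) e1 = 1" "B (br e3 e1) e2 = 1"
    using norm invariant_form_bracket_cyclic[OF assms(1,3), of e1 e2 e3]
      invariant_form_bracket_cyclic[OF assms(1,3), of e3 e1 e2] by simp_all
  have dual0: "B (br x y) x = 0" "B (br x y) y = 0" "B (br x y) (br z w) = 0" for x y z w
    using invariant_form_bracket_self_left[OF assms(1,3)]
      invariant_form_bracket_self_right[OF assms(3)]
      invariant_form_bracket_bracket[OF assms(2,3)] by auto
  have flip: "B x (br y z) = B (br y z) x" for x y z by (rule sym)
  have e: "B e1 e1 = 0" "B e1 e2 = 0" "B e1 e3 = 0" "B e2 e2 = 0" "B e2 e3 = 0" "B e3 e3 = 0"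
    by (simp_all add: isotropic)
  show ?thesis
    by (simp add: b6_frame_def b6_form_components sum_3 bilinear_ladd[OF bB] bilinear_radd[OF bB]
        bilinear_lmul[OF bB] bilinear_rmul[OF bB] dual dual0 e sym[of e2 e1] sym[of e3 e1]
        sym[of e3 e2] flip[of e1] flip[of e2] flip[of e3] algebra_simps)
qed

lemma linear_isometry_bij:
  fixes h :: "'b::euclidean_space \<Rightarrow> 'a::euclidean_space"
  assumes "linear h" "DIM('b) = DIM('a)" "bilinear B'" "form_radical B = {0}"
    and isometry: "\<And>u v. B' (h u) (h v) = B u v"
  shows "bij h"
proof -
  have "inj h"
  proof (rule linear_injective_0[OF assms(1), THEN iffD2], intro allI impI)
    fix u assume "h u = 0"
    then have "B u v = 0" for v
      using isometry[of u v] bilinear_lzero[OF assms(3)] by simp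
    with assms(4) show "u = 0" unfolding form_radical_def by blast
  qed
  moreover have "surj h"
    using linear_injective_imp_surjective[OF assms(1) \<open>inj h\<close>] assms(2) by simp
  ultimately show ?thesis by (rule bijI)
qed

lemma isometric_lie_iso_inv:
  fixes h :: "'b::euclidean_space \<Rightarrow> 'a::euclidean_space"
  assumes "isometric_lie_iso br B br' B' h"
  shows "isometric_lie_iso br' B' br B (inv h)"
proof -
  have h: "linear h" "bij h" "\<And>x y. h (br x y) = br' (h x) (h y)" "\<And>x y. B' (h x) (h y) = B x y"
    using assms unfolding isometric_lie_iso_def by auto
  have hinv: "h (inv h x) = x" for x using bij_inv_eq_iff[OF h(2)] by blast
  have invh: "inv h (h x) = x" for x using bij_is_inj[OF h(2)] by simp
  have "linear (inv h)"
  proof (rule linearI)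
    show "inv h (x + y) = inv h x + inv h y" for x y
      using linear_add[OF h(1), of "inv h x" "inv h y"] by (metis hinv invh)
    show "inv h (c *\<^sub>R x) = c *\<^sub>R inv h x" for c x
      using linear_scale[OF h(1), of c "inv h x"] by (metis hinv invh)
  qed
  with bij_imp_bij_inv[OF h(2)] show ?thesis
    unfolding isometric_lie_iso_def by (metis h(3,4) hinv invh)
qed

theorem corollary5p5:
  fixes br :: "'a::euclidean_space \<Rightarrow> 'a \<Rightarrow> 'a" and B :: "'a \<Rightarrow> 'a \<Rightarrow> real"
  assumes "DIM('a) = 6"
    and "butterfly_algebra br B"
  shows "\<exists>f. isometric_lie_iso br B b6_bracket b6_form f"
proof -
  have lie: "lie_algebra br" and nil: "two_step_nilpotent br"
    and inv: "invariant_symmetric_form br B"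
    using assms(2) unfolding butterfly_algebra_def by auto
  obtain e1 e2 e3 where norm: "B (br e1 e2) e3 = 1"
    and isotropic: "\<And>u v. u \<in> {e1, e2, e3} \<Longrightarrow> v \<in> {e1, e2, e3} \<Longrightarrow> B u v = 0"
    using butterfly_isotropic_triple[OF assms(2)] by blast
  let ?h = "b6_frame br e1 e2 e3"
  have isometry: "B (?h u) (?h v) = b6_form u v" for u v
    by (rule b6_frame_form[OF lie nil inv norm isotropic])
  have "bilinear B"
    using inv unfolding invariant_symmetric_form_def by blast
  then have "bij ?h"
    using linear_isometry_bij[OF linear_b6_frame _ _ form_radical_b6_form isometry] assms(1)
    by simp
  then have "isometric_lie_iso b6_bracket b6_form br B ?h"
    unfolding isometric_lie_iso_def
    using linear_b6_frame b6_frame_bracket[OF lie nil] isometry by metis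
  then show ?thesis
    using isometric_lie_iso_inv by blast
qed

end
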